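(* Let $p$ be a prime and let $r\geq 2$ be an integer with $p\nmid r$. For integers $e\geq 2$ let $S(p,e,r)$ be the smallest set of positive integers such that (a) $r\in S$; (b) $n\in S$ whenever $n^e\in S$; (c) $(n+p)^e\in S$ whenever $n\in S$. Then there exists an integer $e$ with $2\leq e\leq p-2$ such that $S(p,e,r)=\{n\geq 2: n\not\equiv 0\pmod p\}$ if and only if $p-1$ is not squarefree.
   Context: "Smallest" means contained in every set of positive integers satisfying (a), (b), (c). *)

theory Defs
  imports Main "HOL-Computational_Algebra.Squarefree"
begin

definition closed_set :: "nat \<Rightarrow> nat \<Rightarrow> nat \<Rightarrow> nat set \<Rightarrow> bool" where
  "closed_set p e r T \<longleftrightarrow>
     T \<subseteq> {n. n > 0} \<and> r \<in> T \<and>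
     (\<forall>n. n > 0 \<longrightarrow> n ^ e \<in> T \<longrightarrow> n \<in> T) \<and>
     (\<forall>n\<in>T. (n + p) ^ e \<in> T)"

definition S :: "nat \<Rightarrow> nat \<Rightarrow> nat \<Rightarrow> nat set" where
  "S p e r = \<Inter> {T. closed_set p e r T}"

end

theory Submission
  imports Defs "HOL-Number_Theory.Number_Theory"
begin

text \<open>Let U be the set of integers n \<ge> 2 prime to p. Every set satisfying (a)--(c) is closed
  under n \<mapsto> n + p (take the e-th root of (n + p)^e), hence upward closed inside each residue
  class mod p. If every prime factor of p - 1 divides e, then p - 1 divides some e^j; the set
  then contains an element congruent to r^(e^j) \<equiv> 1, hence every large n^(e^i) with n \<in> U,
  and taking roots gives all of U. If a prime q divides p - 1 but not e, the property
  n^((p-1)/q) \<equiv> 1 (mod p) is invariant under n \<mapsto> n^e and n \<mapsto> n + p, so a primitive root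
  shows that S is a proper subset of U. Finally, some e with 2 \<le> e < p - 1 is divisible by all
  prime factors of p - 1 iff p - 1 is not squarefree: (p - 1)/q works when q^2 divides p - 1,
  while a squarefree p - 1 would divide e.\<close>

lemma S_subset: "closed_set p e r T \<Longrightarrow> S p e r \<subseteq> T"
  unfolding S_def by blast

lemma subset_S: "(\<And>T. closed_set p e r T \<Longrightarrow> A \<subseteq> T) \<Longrightarrow> A \<subseteq> S p e r"
  unfolding S_def by blast

lemma closed_set_add_self:
  assumes "closed_set p e r T" "n \<in> T"
  shows "n + p \<in> T"
  using assms unfolding closed_set_def by (metis add_gr_0 mem_Collect_eq subsetD)

lemma cong_add_self_power: "[(n + p) ^ k = n ^ k] (mod (p :: nat))"
  by (intro cong_pow) (simp add: cong_def)

lemma closed_set_prime_to: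
  fixes p e r :: nat
  assumes p: "prime p" and r: "r \<ge> 2" "\<not> p dvd r" and e: "e > 0"
  shows "closed_set p e r {n. n \<ge> 2 \<and> \<not> p dvd n}"
  unfolding closed_set_def
proof (intro conjI allI impI ballI)
  fix n :: nat
  assume n: "n > 0" "n ^ e \<in> {n. n \<ge> 2 \<and> \<not> p dvd n}"
  then have "n \<noteq> 1"
    by auto
  then show "n \<in> {n. n \<ge> 2 \<and> \<not> p dvd n}"
    using n p e by (auto simp: prime_dvd_power_iff)
next
  fix n :: nat
  assume n: "n \<in> {n. n \<ge> 2 \<and> \<not> p dvd n}"
  have "n + p \<le> (n + p) ^ e"
    using e n by (intro self_le_power) auto
  then show "(n + p) ^ e \<in> {n. n \<ge> 2 \<and> \<not> p dvd n}"
    using n p e by (simp add: prime_dvd_power_iff)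
qed (use r in auto)

lemma closed_set_invariant_fibre:
  assumes U: "closed_set p e r U"
    and power_inv: "\<And>n. n \<in> U \<Longrightarrow> \<phi> (n ^ e) = \<phi> n"
    and shift_inv: "\<And>n. n \<in> U \<Longrightarrow> \<phi> (n + p) = \<phi> n"
  shows "closed_set p e r {n \<in> U. \<phi> n = \<phi> r}"
proof -
  have pos: "U \<subseteq> {n. n > 0}" and "r \<in> U"
    and root: "\<And>n. n > 0 \<Longrightarrow> n ^ e \<in> U \<Longrightarrow> n \<in> U"
    and power: "\<And>n. n \<in> U \<Longrightarrow> (n + p) ^ e \<in> U"
    using U unfolding closed_set_def by auto
  show ?thesis
    unfolding closed_set_def
  proof (intro conjI allI impI ballI)
    fix n
    assume "n > 0" and n: "n ^ e \<in> {n \<in> U. \<phi> n = \<phi> r}"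
    then have "n \<in> U"
      using root by blast
    then show "n \<in> {n \<in> U. \<phi> n = \<phi> r}"
      using n power_inv by simp
  next
    fix n
    assume n: "n \<in> {n \<in> U. \<phi> n = \<phi> r}"
    then have "n + p \<in> U"
      using closed_set_add_self[OF U] by blast
    then show "(n + p) ^ e \<in> {n \<in> U. \<phi> n = \<phi> r}"
      using n power power_inv shift_inv by simp
  qed (use pos \<open>r \<in> U\<close> in auto)
qed

lemma closed_set_root_power:
  assumes "closed_set p e r T" "x > 0" "x ^ (e ^ i) \<in> T"
  shows "x \<in> T"
  using assms(2,3)
proof (induction i arbitrary: x)
  case (Suc i)
  have "(x ^ e) ^ (e ^ i) \<in> T"
    using Suc.prems(2) by (simp add: power_mult mult.commute)
  then have "x ^ e \<in> T"
    using Suc.IH Suc.prems(1) by simp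
  then show ?case
    using assms(1) Suc.prems(1) unfolding closed_set_def by blast
qed simp

lemma closed_set_cong_ge:
  fixes p e r :: nat
  assumes T: "closed_set p e r T" and "n \<in> T" "n \<le> m" "[m = n] (mod p)"
  shows "m \<in> T"
proof -
  obtain k where m: "m = k * p + n"
    using assms(3,4) cong_le_nat by blast
  have "n + k * p \<in> T" for k
  proof (induction k)
    case (Suc k)
    then show ?case
      using closed_set_add_self[OF T, of "n + k * p"] by (simp add: add_ac)
  qed (simp add: \<open>n \<in> T\<close>)
  then show ?thesis
    by (simp add: m add.commute)
qed

lemma closed_set_power_residue:
  fixes p e r :: nat
  assumes T: "closed_set p e r T"
  shows "\<exists>m\<in>T. [m = r ^ (e ^ j)] (mod p)"
proof (induction j)
  case 0
  have "r \<in> T"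
    using T unfolding closed_set_def by blast
  then show ?case
    by (intro bexI[of _ r]) simp_all
next
  case (Suc j)
  then obtain m where "m \<in> T" and m: "[m = r ^ (e ^ j)] (mod p)"
    by blast
  have "(m + p) ^ e \<in> T"
    using T \<open>m \<in> T\<close> unfolding closed_set_def by blast
  moreover have "[(m + p) ^ e = (r ^ (e ^ j)) ^ e] (mod p)"
    using cong_trans[OF cong_add_self_power cong_pow[OF m]] .
  moreover have "(r ^ (e ^ j)) ^ e = r ^ (e ^ Suc j)"
    by (simp add: power_mult[symmetric] mult.commute)
  ultimately show ?case
    by auto
qed

lemma fermat_theorem_dvd:
  fixes p x k :: nat
  assumes "prime p" "\<not> p dvd x" "(p - 1) dvd k"
  shows "[x ^ k = 1] (mod p)"
proof -
  obtain l where "k = (p - 1) * l"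
    using assms(3) by blast
  then show ?thesis
    using cong_pow[OF fermat_theorem[OF assms(1,2)], of l] by (simp add: power_mult)
qed

lemma prime_to_subset_closed_set:
  fixes p e r :: nat
  assumes p: "prime p" and r: "\<not> p dvd r" and e: "e \<ge> 2" and j: "(p - 1) dvd e ^ j"
    and T: "closed_set p e r T"
  shows "{n. n \<ge> 2 \<and> \<not> p dvd n} \<subseteq> T"
proof
  fix n
  assume n: "n \<in> {n. n \<ge> 2 \<and> \<not> p dvd n}"
  obtain c where "c \<in> T" and "[c = r ^ (e ^ j)] (mod p)"
    using closed_set_power_residue[OF T] by blast
  then have c: "[c = 1] (mod p)"
    using fermat_theorem_dvd[OF p r j] cong_trans by blast
  define i where "i = j + c"
  have "(p - 1) dvd e ^ i"
    using j unfolding i_def by (simp add: power_add)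
  then have "[n ^ (e ^ i) = c] (mod p)"
    using fermat_theorem_dvd[OF p, of n] n c by (auto intro: cong_trans cong_sym)
  moreover have "c \<le> n ^ (e ^ i)"
  proof -
    have "c < 2 ^ c" by (rule less_exp)
    also have "\<dots> \<le> 2 ^ i" unfolding i_def by simp
    also have "\<dots> \<le> e ^ i" using e by (simp add: power_mono)
    also have "\<dots> < 2 ^ (e ^ i)" by (rule less_exp)
    also have "\<dots> \<le> n ^ (e ^ i)" using n by (simp add: power_mono)
    finally show ?thesis by simp
  qed
  ultimately have "n ^ (e ^ i) \<in> T"
    using closed_set_cong_ge[OF T \<open>c \<in> T\<close>] by blast
  then show "n \<in> T"
    using closed_set_root_power[OF T] n by simp
qed

lemma cong_power_one_iff_coprime_exponent:
  fixes x m q t e :: nat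
  assumes x: "[x ^ (q * t) = 1] (mod m)" and qe: "coprime q e"
  shows "[(x ^ e) ^ t = 1] (mod m) \<longleftrightarrow> [x ^ t = 1] (mod m)"
proof
  have swap: "(x ^ e) ^ t = (x ^ t) ^ e"
    by (simp add: power_mult[symmetric] mult.commute)
  assume "[(x ^ e) ^ t = 1] (mod m)"
  then have "ord m (x ^ t) dvd e"
    unfolding swap by (rule ord_divides[THEN iffD1])
  moreover have "ord m (x ^ t) dvd q"
    using x by (intro ord_divides[THEN iffD1]) (simp add: power_mult[symmetric] mult.commute)
  ultimately have "ord m (x ^ t) = 1"
    using qe coprime_common_divisor_nat by blast
  then show "[x ^ t = 1] (mod m)"
    using ord_divides[of "x ^ t" 1 m] by simp
next
  assume "[x ^ t = 1] (mod m)"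
  then have "[(x ^ t) ^ e = 1 ^ e] (mod m)"
    by (rule cong_pow)
  then show "[(x ^ e) ^ t = 1] (mod m)"
    by (simp add: power_mult[symmetric] mult.commute)
qed

lemma exists_prime_to_power_not_cong_one:
  fixes p t :: nat
  assumes p: "prime p" and t: "\<not> (p - 1) dvd t"
  shows "\<exists>n. n \<ge> 2 \<and> \<not> p dvd n \<and> \<not> [n ^ t = 1] (mod p)"
proof -
  obtain g where "residue_primroot p g"
    using prime_primitive_root_exists[OF prime_gt_1_nat[OF p] p] by blast
  then have "coprime p g" and "ord p g = p - 1"
    using totient_prime[OF p] unfolding residue_primroot_def by auto
  have "\<not> p dvd g"
  proof
    assume "p dvd g"
    then have "is_unit p"
      using coprime_absorb_left[OF \<open>p dvd g\<close>] \<open>coprime p g\<close> by simp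
    with p show False
      by (simp add: not_prime_unit)
  qed
  then have "\<not> p dvd g + p"
    by (simp add: dvd_add_left_iff)
  moreover have "\<not> [g ^ t = 1] (mod p)"
    using t \<open>ord p g = p - 1\<close> by (simp add: ord_divides')
  then have "\<not> [(g + p) ^ t = 1] (mod p)"
    using cong_trans[OF cong_sym[OF cong_add_self_power]] by blast
  ultimately show ?thesis
    using prime_ge_2_nat[OF p] by (intro exI[of _ "g + p"]) simp
qed

lemma S_neq_prime_to:
  fixes p e r q :: nat
  assumes p: "prime p" and r: "r \<ge> 2" "\<not> p dvd r" and e: "e > 0"
    and q: "prime q" "q dvd p - 1" "\<not> q dvd e"
  shows "S p e r \<noteq> {n. n \<ge> 2 \<and> \<not> p dvd n}"
proof
  assume S: "S p e r = {n. n \<ge> 2 \<and> \<not> p dvd n}"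
  define U where "U = {n. n \<ge> 2 \<and> \<not> p dvd n}"
  obtain t where t: "p - 1 = q * t"
    using q(2) by blast
  have "coprime q e"
    using q prime_imp_coprime by blast
  define \<phi> where "\<phi> n \<longleftrightarrow> [n ^ t = 1] (mod p)" for n
  have "closed_set p e r {n \<in> U. \<phi> n = \<phi> r}"
  proof (rule closed_set_invariant_fibre)
    show "closed_set p e r U"
      unfolding U_def using closed_set_prime_to[OF p r e] .
    show "\<phi> (n ^ e) = \<phi> n" if "n \<in> U" for n
    proof -
      have "[n ^ (q * t) = 1] (mod p)"
        using fermat_theorem[OF p, of n] that unfolding U_def t by simp
      then show ?thesis
        unfolding \<phi>_def by (rule cong_power_one_iff_coprime_exponent[OF _ \<open>coprime q e\<close>])
    qed
    show "\<phi> (n + p) = \<phi> n" for n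
      unfolding \<phi>_def
      using cong_trans[OF cong_add_self_power] cong_trans[OF cong_sym[OF cong_add_self_power]]
      by blast
  qed
  then have U_fibre: "\<phi> n = \<phi> r" if "n \<in> U" for n
    using S_subset S that unfolding U_def by blast
  have "\<not> p dvd p + 1"
    using p by (metis dvd_add_right_iff dvd_refl nat_dvd_1_iff_1 not_prime_1)
  then have "p + 1 \<in> U"
    using prime_gt_1_nat[OF p] unfolding U_def by simp
  moreover have "\<phi> (p + 1)"
    unfolding \<phi>_def using cong_add_self_power[of 1 p t] by (simp add: add.commute)
  moreover obtain n where "n \<in> U" "\<not> \<phi> n"
  proof -
    have "t > 0"
      using t prime_gt_1_nat[OF p] by (cases t) auto
    then have "t < p - 1"
      using t prime_gt_1_nat[OF q(1)] by simp
    with \<open>t > 0\<close> have "\<not> (p - 1) dvd t"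
      by (auto dest: dvd_imp_le)
    then show ?thesis
      using exists_prime_to_power_not_cong_one[OF p] that unfolding U_def \<phi>_def by blast
  qed
  ultimately show False
    using U_fibre[of "p + 1"] U_fibre[of n] by simp
qed

lemma dvd_power_if_prime_factors_subset:
  fixes m e :: nat
  assumes m: "m > 0" and e: "e > 0" and sub: "prime_factors m \<subseteq> prime_factors e"
  shows "m dvd e ^ m"
proof (rule multiplicity_le_imp_dvd)
  fix s :: nat
  assume s: "prime s"
  show "multiplicity s m \<le> multiplicity s (e ^ m)"
  proof (cases "s dvd m")
    case True
    have "m < 2 ^ m" by (rule less_exp)
    also have "\<dots> \<le> s ^ m" using prime_ge_2_nat[OF s] by (simp add: power_mono)
    finally have "multiplicity s m < m"
      by (intro multiplicity_lessI) (use m in \<open>auto dest: dvd_imp_le\<close>)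
    moreover have "1 \<le> multiplicity s e"
      using sub s m e True by (auto simp: in_prime_factors_iff Suc_le_eq prime_multiplicity_gt_zero_iff)
    ultimately have "multiplicity s m \<le> m * multiplicity s e"
      by (metis less_imp_le mult_le_mono2 mult_1_right order.trans)
    then show ?thesis
      using s e by (simp add: prime_elem_multiplicity_power_distrib)
  qed (simp add: not_dvd_imp_multiplicity_0)
qed (use m in simp)

theorem S_eq_prime_to_iff:
  fixes p e r :: nat
  assumes p: "prime p" and r: "r \<ge> 2" "\<not> p dvd r" and e: "e \<ge> 2"
  shows "S p e r = {n. n \<ge> 2 \<and> \<not> p dvd n} \<longleftrightarrow> prime_factors (p - 1) \<subseteq> prime_factors e"
proof
  assume S: "S p e r = {n. n \<ge> 2 \<and> \<not> p dvd n}"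
  show "prime_factors (p - 1) \<subseteq> prime_factors e"
  proof
    fix q
    assume "q \<in> prime_factors (p - 1)"
    then have q: "prime q" "q dvd p - 1"
      by (auto simp: in_prime_factors_iff)
    have "q dvd e"
    proof (rule ccontr)
      assume "\<not> q dvd e"
      with S_neq_prime_to[OF p r _ q] S e show False
        by simp
    qed
    then show "q \<in> prime_factors e"
      using q e by (auto simp: in_prime_factors_iff)
  qed
next
  assume "prime_factors (p - 1) \<subseteq> prime_factors e"
  then have j: "(p - 1) dvd e ^ (p - 1)"
    using dvd_power_if_prime_factors_subset prime_gt_1_nat[OF p] e by simp
  have "S p e r \<subseteq> {n. n \<ge> 2 \<and> \<not> p dvd n}"
    using e by (intro S_subset closed_set_prime_to[OF p r]) simp
  moreover have "{n. n \<ge> 2 \<and> \<not> p dvd n} \<subseteq> S p e r"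
    by (rule subset_S) (rule prime_to_subset_closed_set[OF p r(2) e j])
  ultimately show "S p e r = {n. n \<ge> 2 \<and> \<not> p dvd n}"
    by (rule subset_antisym)
qed

lemma squarefree_dvd_if_prime_factors_subset:
  fixes m e :: nat
  assumes m: "squarefree m" and e: "e > 0" and sub: "prime_factors m \<subseteq> prime_factors e"
  shows "m dvd e"
proof (rule multiplicity_le_imp_dvd)
  show "m \<noteq> 0"
    using m by (metis not_squarefree_0)
  fix s :: nat
  assume s: "prime s"
  show "multiplicity s m \<le> multiplicity s e"
  proof (cases "s dvd m")
    case True
    then have "multiplicity s e > 0"
      using sub s e \<open>m \<noteq> 0\<close> by (auto simp: in_prime_factors_iff prime_multiplicity_gt_zero_iff)
    moreover have "multiplicity s m \<le> 1"
      using squarefree_factorial_semiring''[OF \<open>m \<noteq> 0\<close>] m s by blast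
    ultimately show ?thesis
      by linarith
  qed (simp add: not_dvd_imp_multiplicity_0)
qed

lemma not_squarefree_iff_ex_less_prime_factors_subset:
  fixes m :: nat
  assumes m: "m > 0"
  shows "\<not> squarefree m \<longleftrightarrow> (\<exists>e. 2 \<le> e \<and> e < m \<and> prime_factors m \<subseteq> prime_factors e)"
proof
  assume "\<not> squarefree m"
  then obtain q where q: "prime q" "q ^ 2 dvd m"
    using squarefree_factorial_semiring m by auto
  then obtain k where k: "m = q * (q * k)"
    by (auto simp: power2_eq_square mult.assoc elim!: dvdE)
  have "q \<ge> 2" "k > 0"
    using q(1) k m prime_ge_2_nat by auto
  then have "2 \<le> q * k" "q * k < m"
    using k mult_le_mono[of 2 q 1 k] by simp_all
  moreover have "prime_factors m \<subseteq> prime_factors (q * k)"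
    using k q(1) m by (auto simp: in_prime_factors_iff prime_dvd_mult_iff primes_dvd_imp_eq)
  ultimately show "\<exists>e. 2 \<le> e \<and> e < m \<and> prime_factors m \<subseteq> prime_factors e"
    by blast
next
  assume "\<exists>e. 2 \<le> e \<and> e < m \<and> prime_factors m \<subseteq> prime_factors e"
  then obtain e where e: "2 \<le> e" "e < m" "prime_factors m \<subseteq> prime_factors e"
    by blast
  show "\<not> squarefree m"
  proof
    assume "squarefree m"
    then have "m dvd e"
      using squarefree_dvd_if_prime_factors_subset e by simp
    then show False
      using e by (auto dest: dvd_imp_le)
  qed
qed

theorem corollary22:
  fixes p r :: nat
  assumes "prime p" and "r \<ge> 2" and "\<not> p dvd r"
  shows "(\<exists>e::nat. 2 \<le> e \<and> e \<le> p - 2 \<and> S p e r = {n. n \<ge> 2 \<and> \<not> p dvd n})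
         \<longleftrightarrow> \<not> squarefree (p - 1)"
proof -
  have "2 \<le> e \<and> e \<le> p - 2 \<and> S p e r = {n. n \<ge> 2 \<and> \<not> p dvd n}
    \<longleftrightarrow> 2 \<le> e \<and> e < p - 1 \<and> prime_factors (p - 1) \<subseteq> prime_factors e" for e
    using S_eq_prime_to_iff[OF assms, of e] by auto
  then have "(\<exists>e::nat. 2 \<le> e \<and> e \<le> p - 2 \<and> S p e r = {n. n \<ge> 2 \<and> \<not> p dvd n})
      \<longleftrightarrow> (\<exists>e. 2 \<le> e \<and> e < p - 1 \<and> prime_factors (p - 1) \<subseteq> prime_factors e)"
    by (rule ex_cong1)
  also have "\<dots> \<longleftrightarrow> \<not> squarefree (p - 1)"
    using not_squarefree_iff_ex_less_prime_factors_subset prime_gt_1_nat[OF assms(1)] by simp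
  finally show ?thesis .
qed

end
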